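(* Under the setting and assumptions in the context (in particular $\lambda_t=c\,e^{-\gamma t}$ with $0<c<1$, $\gamma>0$, the state bound $|x_i(t)|\le\eta$, informative trust observations $E_{\mathcal L}>0>E_{\mathcal M}$, and connectedness of the subgraph induced by the legitimate agents), almost surely the legitimate agents' states converge to a common finite value: there exist almost surely finite random vectors $\tilde x^{\mathcal L},\tilde x^{\mathcal M}\in\mathbb R^{L}$ such that $$\lim_{t\to\infty} x^{\mathcal L}(t)=\mathbf 1\, v^\top(\tilde x^{\mathcal L}+\tilde x^{\mathcal M}),$$ where $v$ is the stochastic vector with $(\overline W^{\mathcal L})^{\infty}=\mathbf 1 v^\top$. Explicitly, writing $P^{\lambda}_{k_0}=\prod_{k=\max\{k_0,T_f\}}^{\infty}(1-\lambda_k)$ and $Q_{k_0}=\prod_{k=k_0}^{\max\{k_0,T_f\}-1}(1-\lambda_k)W^{\mathcal L}_k$ (ordered product, later factors on the left; empty product $=I$), one has $\tilde x^{\mathcal L}=P^{\lambda}_0Q_0x^{\mathcal L}(0)+\sum_{k=0}^{\infty}P^{\lambda}_{k+1}Q_{k+1}\lambda_k x^{\mathcal L}(0)$ and $\tilde x^{\mathcal M}=\sum_{k=0}^{T_f-1}P^{\lambda}_{k+1}Q_{k+1}(1-\lambda_k)W^{\mathcal M}_k x^{\mathcal M}(k)$.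
   Context: Agents $\mathcal V=\{1,\dots,N\}$ communicate over a fixed graph $\mathcal G=(\mathcal V,\mathcal E)$; $(i,j)\in\mathcal E$ means $j$ can send data to $i$, and $\mathcal N_i=\{j\in\mathcal V:(i,j)\in\mathcal E\}$ (with $i\notin\mathcal N_i$). Legitimate agents are $\mathcal L=\{1,\dots,L\}$, malicious agents $\mathcal M=\{L+1,\dots,N\}$, $M=N-L$. The subgraph induced by $\mathcal L$ is connected. $x_i(t)\in\mathbb R$ is agent $i$'s state, $x^{\mathcal L}(t)\in\mathbb R^L$, $x^{\mathcal M}(t)\in\mathbb R^M$ the stacked states; malicious states evolve arbitrarily. State bound: $\max_{i\in\mathcal V,t\ge0}|x_i(t)|\le\eta$. Nominal matrix $\overline W^{\mathcal L}\in\mathbb R^{L\times L}$: $[\overline W^{\mathcal L}]_{ij}=1/(|\mathcal N_i\cap\mathcal L|+1)$ if $j\in\mathcal N_i\cap\mathcal L$, $0$ if $j\notin\mathcal N_i\cup\{i\}$, and $[\overline W^{\mathcal L}]_{ii}=1-\sum_{j\in\mathcal N_i\cap\mathcal L}[\overline W^{\mathcal L}]_{ij}$. It is primitive and $(\overline W^{\mathcal L})^\infty=\mathbf 1v^\top$ for a stochastic vector $v$. Trust: for each $i\in\mathcal L$, $j\in\mathcal N_i$, $t\ge0$ an observation $\alpha_{ij}(t)\in[0,1]$ is available; for each pair the $\alpha_{ij}(t)$, $t\ge0$, are independent with a common mean, and $E_{\mathcal L}=\mathbb E[\alpha_{ij}]-1/2$ if $j\in\mathcal L$, $E_{\mathcal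 M}=\mathbb E[\alpha_{ij}]-1/2$ if $j\in\mathcal M$; assume $E_{\mathcal L}>0$, $E_{\mathcal M}<0$. Let $\beta_{ij}(t)=\sum_{s=0}^t(\alpha_{ij}(s)-1/2)$ and $\mathcal N_i(t)=\{j\in\mathcal N_i:\beta_{ij}(t)\ge0\}$. Weights: $w_{ij}(t)=1/(|\mathcal N_i(t)|+1)$ if $j\in\mathcal N_i(t)$, $0$ if $j\notin\mathcal N_i(t)\cup\{i\}$, $w_{ii}(t)=1-\sum_{j\in\mathcal N_i}w_{ij}(t)$. Protocol for $i\in\mathcal L$, $t\ge0$: $x_i(t+1)=\lambda_t x_i(0)+(1-\lambda_t)\sum_{j\in\mathcal N_i\cup\{i\}}w_{ij}(t)x_j(t)$, with $\lambda_t=c\,e^{-\gamma t}$, $0<c<1$, $\gamma>0$. $W^{\mathcal L}_t=[w_{ij}(t)]_{i,j\in\mathcal L}$, $W^{\mathcal M}_t=[w_{ij}(t)]_{i\in\mathcal L,j\in\mathcal M}$. $T_f$ is the (random) smallest time such that $W^{\mathcal L}_t=\overline W^{\mathcal L}$ for all $t\ge T_f$; it is finite almost surely. *)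

theory Defs
  imports "HOL-Probability.Probability"
begin

text \<open>Agents are indexed 0..N-1; legitimate agents are 0..L-1, malicious ones L..N-1.
  E i j means that agent j can send data to agent i.\<close>

definition nbrs :: "nat \<Rightarrow> (nat \<Rightarrow> nat \<Rightarrow> bool) \<Rightarrow> nat \<Rightarrow> nat set" where
  "nbrs N E i = {j. j < N \<and> E i j \<and> j \<noteq> i}"

text \<open>a i j s is the (realised) trust observation alpha_ij(s).\<close>
definition beta :: "(nat \<Rightarrow> nat \<Rightarrow> nat \<Rightarrow> real) \<Rightarrow> nat \<Rightarrow> nat \<Rightarrow> nat \<Rightarrow> real" where
  "beta a i j t = (\<Sum>s\<le>t. a i j s - 1/2)"

definition trusted :: "nat \<Rightarrow> (nat \<Rightarrow> nat \<Rightarrow> bool) \<Rightarrow> (nat \<Rightarrow> nat \<Rightarrow> nat \<Rightarrow> real)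
    \<Rightarrow> nat \<Rightarrow> nat \<Rightarrow> nat set" where
  "trusted N E a i t = {j \<in> nbrs N E i. beta a i j t \<ge> 0}"

definition woff :: "nat \<Rightarrow> (nat \<Rightarrow> nat \<Rightarrow> bool) \<Rightarrow> (nat \<Rightarrow> nat \<Rightarrow> nat \<Rightarrow> real)
    \<Rightarrow> nat \<Rightarrow> nat \<Rightarrow> nat \<Rightarrow> real" where
  "woff N E a i j t = (if j \<in> trusted N E a i t then 1 / (real (card (trusted N E a i t)) + 1) else 0)"

definition wt :: "nat \<Rightarrow> (nat \<Rightarrow> nat \<Rightarrow> bool) \<Rightarrow> (nat \<Rightarrow> nat \<Rightarrow> nat \<Rightarrow> real)
    \<Rightarrow> nat \<Rightarrow> nat \<Rightarrow> nat \<Rightarrow> real" where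
  "wt N E a i j t = (if j = i then 1 - (\<Sum>k\<in>nbrs N E i. woff N E a i k t) else woff N E a i j t)"

text \<open>Nominal matrix (entries for i, j < L).\<close>
definition Wbar :: "nat \<Rightarrow> nat \<Rightarrow> (nat \<Rightarrow> nat \<Rightarrow> bool) \<Rightarrow> nat \<Rightarrow> nat \<Rightarrow> real" where
  "Wbar N L E i j =
     (if j = i then 1 - (\<Sum>k\<in>nbrs N E i \<inter> {..<L}. 1 / (real (card (nbrs N E i \<inter> {..<L})) + 1))
      else if j \<in> nbrs N E i \<inter> {..<L} then 1 / (real (card (nbrs N E i \<inter> {..<L})) + 1) else 0)"

definition Tf :: "nat \<Rightarrow> nat \<Rightarrow> (nat \<Rightarrow> nat \<Rightarrow> bool) \<Rightarrow> (nat \<Rightarrow> nat \<Rightarrow> nat \<Rightarrow> real) \<Rightarrow> nat" where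
  "Tf N L E a = (LEAST T. \<forall>t\<ge>T. \<forall>i<L. \<forall>j<L. wt N E a i j t = Wbar N L E i j)"

definition lam :: "real \<Rightarrow> real \<Rightarrow> nat \<Rightarrow> real" where
  "lam c \<gamma> t = c * exp (- \<gamma> * real t)"

text \<open>L x L matrices and L-vectors as functions on indices below L.\<close>
definition mat_mult :: "nat \<Rightarrow> (nat \<Rightarrow> nat \<Rightarrow> real) \<Rightarrow> (nat \<Rightarrow> nat \<Rightarrow> real) \<Rightarrow> nat \<Rightarrow> nat \<Rightarrow> real" where
  "mat_mult L A B i j = (\<Sum>k<L. A i k * B k j)"

definition mat_vec :: "nat \<Rightarrow> (nat \<Rightarrow> nat \<Rightarrow> real) \<Rightarrow> (nat \<Rightarrow> real) \<Rightarrow> nat \<Rightarrow> real" where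
  "mat_vec L A x i = (\<Sum>k<L. A i k * x k)"

definition mat_id :: "nat \<Rightarrow> nat \<Rightarrow> real" where
  "mat_id i j = (if i = j then 1 else 0)"

fun matpow :: "nat \<Rightarrow> (nat \<Rightarrow> nat \<Rightarrow> real) \<Rightarrow> nat \<Rightarrow> nat \<Rightarrow> nat \<Rightarrow> real" where
  "matpow L A 0 = mat_id"
| "matpow L A (Suc n) = mat_mult L A (matpow L A n)"

fun oprod :: "nat \<Rightarrow> (nat \<Rightarrow> nat \<Rightarrow> nat \<Rightarrow> real) \<Rightarrow> nat \<Rightarrow> nat \<Rightarrow> nat \<Rightarrow> nat \<Rightarrow> real" where
  "oprod L F a 0 = mat_id"
| "oprod L F a (Suc n) = mat_mult L (F (a + n)) (oprod L F a n)"

definition Plam :: "real \<Rightarrow> real \<Rightarrow> nat \<Rightarrow> nat \<Rightarrow> real" where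
  "Plam c \<gamma> T k0 = (\<Prod>n. 1 - lam c \<gamma> (n + max k0 T))"

definition Qm :: "nat \<Rightarrow> nat \<Rightarrow> (nat \<Rightarrow> nat \<Rightarrow> bool) \<Rightarrow> (nat \<Rightarrow> nat \<Rightarrow> nat \<Rightarrow> real)
    \<Rightarrow> real \<Rightarrow> real \<Rightarrow> nat \<Rightarrow> nat \<Rightarrow> nat \<Rightarrow> nat \<Rightarrow> real" where
  "Qm N L E a c \<gamma> T k0 =
     oprod L (\<lambda>k i j. (1 - lam c \<gamma> k) * wt N E a i j k) k0 (max k0 T - k0)"

text \<open>The k-th summand of tilde x^L (component i); x0 = x^L(0).\<close>
definition xtL_term :: "nat \<Rightarrow> nat \<Rightarrow> (nat \<Rightarrow> nat \<Rightarrow> bool) \<Rightarrow> (nat \<Rightarrow> nat \<Rightarrow> nat \<Rightarrow> real)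
    \<Rightarrow> real \<Rightarrow> real \<Rightarrow> (nat \<Rightarrow> real) \<Rightarrow> nat \<Rightarrow> nat \<Rightarrow> real" where
  "xtL_term N L E a c \<gamma> x0 i k =
     (let T = Tf N L E a in
      Plam c \<gamma> T (k + 1) * mat_vec L (Qm N L E a c \<gamma> T (k + 1)) (\<lambda>j. lam c \<gamma> k * x0 j) i)"

definition xtilde_L :: "nat \<Rightarrow> nat \<Rightarrow> (nat \<Rightarrow> nat \<Rightarrow> bool) \<Rightarrow> (nat \<Rightarrow> nat \<Rightarrow> nat \<Rightarrow> real)
    \<Rightarrow> real \<Rightarrow> real \<Rightarrow> (nat \<Rightarrow> real) \<Rightarrow> nat \<Rightarrow> real" where
  "xtilde_L N L E a c \<gamma> x0 i =
     (let T = Tf N L E a in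
      Plam c \<gamma> T 0 * mat_vec L (Qm N L E a c \<gamma> T 0) x0 i
      + (\<Sum>k. xtL_term N L E a c \<gamma> x0 i k))"

text \<open>xs j k is the state of (malicious) agent j at time k.\<close>
definition xtilde_M :: "nat \<Rightarrow> nat \<Rightarrow> (nat \<Rightarrow> nat \<Rightarrow> bool) \<Rightarrow> (nat \<Rightarrow> nat \<Rightarrow> nat \<Rightarrow> real)
    \<Rightarrow> real \<Rightarrow> real \<Rightarrow> (nat \<Rightarrow> nat \<Rightarrow> real) \<Rightarrow> nat \<Rightarrow> real" where
  "xtilde_M N L E a c \<gamma> xs i =
     (let T = Tf N L E a in
      (\<Sum>k<T. Plam c \<gamma> T (k + 1) * mat_vec L (Qm N L E a c \<gamma> T (k + 1))
          (\<lambda>l. (1 - lam c \<gamma> k) * (\<Sum>m\<in>{L..<N}. wt N E a l m k * xs m k)) i))"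

end

theory Submission
  imports Defs
begin

text \<open>
  By Hoeffding's inequality and Borel--Cantelli, each accumulated trust value beta_ij(t) has almost
  surely the sign of its mean drift from some time on, so T_f is finite: from then on the legitimate
  agents use the nominal weights and ignore the malicious ones. Unrolling the protocol, x^L(t) is a
  sum of the initial state and of the inputs lambda_k x^L(0) and (1 - lambda_k) W^M_k x^M(k), each
  transported to time t by the products of the damped weight matrices. After T_f such a transport
  is (prod (1 - lambda_k)) times a power of the nominal matrix, which converges; the inputs
  lambda_k x^L(0) are summable and the malicious inputs vanish after T_f, so the limits can be
  added up (by Tannery's theorem for the infinite part).
\<close>

section \<open>Sign of the accumulated trust\<close>

lemma AE_eventually_centered_sum_pos:
  fixes X :: "nat \<Rightarrow> 'a \<Rightarrow> real"
  assumes "prob_space M"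
    and meas: "\<And>t. X t \<in> borel_measurable M"
    and range: "\<And>t \<omega>. \<omega> \<in> space M \<Longrightarrow> 0 \<le> X t \<omega> \<and> X t \<omega> \<le> 1"
    and indep: "prob_space.indep_vars M (\<lambda>_. borel) X UNIV"
    and mean: "\<And>t. prob_space.expectation M (X t) - 1/2 = e"
    and "e > 0"
  shows "AE \<omega> in M. eventually (\<lambda>n. (\<Sum>s\<le>n. X s \<omega> - 1/2) > 0) sequentially"
proof -
  interpret prob_space M by fact
  define A where "A n = {\<omega>\<in>space M. (\<Sum>s\<le>n. X s \<omega>) \<le> (\<Sum>s\<le>n. expectation (X s)) - (real n + 1) * e}"
    for n
  have prob_A: "prob (A n) \<le> exp (-2 * e\<^sup>2) ^ Suc n" for n
  proof -
    interpret Hoeffding_ineq M "{..n}" X "\<lambda>_. 0" "\<lambda>_. 1" "\<Sum>s\<le>n. expectation (X s)"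
    proof unfold_locales
      show "indep_vars (\<lambda>_. borel) X {..n}" using indep indep_vars_subset by blast
    qed (use range in auto)
    have "prob (A n) \<le> exp (-2 * ((real n + 1) * e)\<^sup>2 / (\<Sum>s\<le>n. (1 - 0)\<^sup>2))"
      unfolding A_def by (rule Hoeffding_ineq_le) (use \<open>e > 0\<close> in auto)
    also have "-2 * ((real n + 1) * e)\<^sup>2 / (\<Sum>s\<le>n. (1 - 0)\<^sup>2) = real (Suc n) * (-2 * e\<^sup>2)"
      by (simp add: power2_eq_square field_simps)
    also have "exp (real (Suc n) * (-2 * e\<^sup>2)) = exp (-2 * e\<^sup>2) ^ Suc n"
      by (rule exp_of_nat_mult)
    finally show ?thesis .
  qed
  have "A n \<in> sets M" for n unfolding A_def using meas by measurable
  moreover have "summable (\<lambda>n. measure M (A n))"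
  proof (rule summable_comparison_test)
    show "\<exists>N. \<forall>n\<ge>N. norm (measure M (A n)) \<le> exp (-2 * e\<^sup>2) ^ Suc n" using prob_A by auto
    show "summable (\<lambda>n. exp (-2 * e\<^sup>2) ^ Suc n)" using \<open>e > 0\<close> by (simp add: summable_geometric)
  qed
  ultimately have "AE \<omega> in M. eventually (\<lambda>n. \<omega> \<in> space M - A n) sequentially"
    by (intro borel_cantelli_AE1) (simp_all add: less_top[symmetric])
  moreover have "(\<Sum>s\<le>n. expectation (X s)) = (real n + 1) * (e + 1/2)" for n
    using mean by (simp add: algebra_simps)
  ultimately show ?thesis
    by (elim AE_mp) (auto intro!: AE_I2 elim!: eventually_mono simp: A_def sum_subtractf algebra_simps)
qed

lemma AE_eventually_centered_sum_neg:
  fixes X :: "nat \<Rightarrow> 'a \<Rightarrow> real"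
  assumes "prob_space M"
    and meas: "\<And>t. X t \<in> borel_measurable M"
    and range: "\<And>t \<omega>. \<omega> \<in> space M \<Longrightarrow> 0 \<le> X t \<omega> \<and> X t \<omega> \<le> 1"
    and indep: "prob_space.indep_vars M (\<lambda>_. borel) X UNIV"
    and mean: "\<And>t. prob_space.expectation M (X t) - 1/2 = e"
    and "e < 0"
  shows "AE \<omega> in M. eventually (\<lambda>n. (\<Sum>s\<le>n. X s \<omega> - 1/2) < 0) sequentially"
proof -
  interpret prob_space M by fact
  have "integrable M (X t)" for t
    by (rule integrable_const_bound[where B=1]) (use meas range in \<open>auto simp: abs_le_iff\<close>)
  then have "expectation (\<lambda>\<omega>. 1 - X t \<omega>) - 1/2 = - e" for t
    using mean[of t] by (simp add: prob_space)
  then have "AE \<omega> in M. eventually (\<lambda>n. (\<Sum>s\<le>n. (1 - X s \<omega>) - 1/2) > 0) sequentially"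
    using \<open>e < 0\<close> meas range
    by (intro AE_eventually_centered_sum_pos[where e="-e"] indep_vars_compose2[OF indep] \<open>prob_space M\<close>)
       auto
  then show ?thesis
    by (elim AE_mp) (auto intro!: AE_I2 elim: eventually_mono simp: sum_subtractf)
qed

lemma finite_nbrs: "finite (nbrs N E i)"
  by (rule finite_subset[of _ "{..<N}"]) (auto simp: nbrs_def)

lemma eventually_trusted_eq_legit_nbrs:
  assumes "\<forall>i<L. \<forall>j\<in>nbrs N E i. eventually
             (\<lambda>t. (j < L \<longrightarrow> 0 \<le> beta a i j t) \<and> (L \<le> j \<longrightarrow> beta a i j t < 0)) sequentially"
  shows "eventually (\<lambda>t. \<forall>i<L. trusted N E a i t = nbrs N E i \<inter> {..<L}) sequentially"
proof -
  have "eventually (\<lambda>t. \<forall>i\<in>{..<L}. \<forall>j\<in>nbrs N E i.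
          (j < L \<longrightarrow> 0 \<le> beta a i j t) \<and> (L \<le> j \<longrightarrow> beta a i j t < 0)) sequentially"
    using assms by (auto intro!: eventually_ball_finite finite_nbrs)
  then show ?thesis
    by (rule eventually_mono) (force simp: trusted_def not_less)
qed

lemma AE_eventually_trusted_eq_legit_nbrs:
  fixes alpha :: "nat \<Rightarrow> nat \<Rightarrow> nat \<Rightarrow> 'a \<Rightarrow> real"
  assumes P: "prob_space M"
    and meas: "\<forall>i<L. \<forall>j\<in>nbrs N E i. \<forall>t. alpha i j t \<in> borel_measurable M"
    and range: "\<forall>i<L. \<forall>j\<in>nbrs N E i. \<forall>t. \<forall>\<omega>\<in>space M. 0 \<le> alpha i j t \<omega> \<and> alpha i j t \<omega> \<le> 1"
    and indep: "\<forall>i<L. \<forall>j\<in>nbrs N E i. prob_space.indep_vars M (\<lambda>_. borel) (\<lambda>t. alpha i j t) UNIV"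
    and meanL: "\<forall>i<L. \<forall>j\<in>nbrs N E i. j < L \<longrightarrow>
                  (\<forall>t. prob_space.expectation M (alpha i j t) - 1/2 = EL)"
    and meanM: "\<forall>i<L. \<forall>j\<in>nbrs N E i. L \<le> j \<longrightarrow>
                  (\<forall>t. prob_space.expectation M (alpha i j t) - 1/2 = EM)"
    and "EL > 0" "EM < 0"
  shows "AE \<omega> in M. eventually (\<lambda>t. \<forall>i<L.
           trusted N E (\<lambda>p q s. alpha p q s \<omega>) i t = nbrs N E i \<inter> {..<L}) sequentially"
proof -
  interpret prob_space M by fact
  have "AE \<omega> in M. \<forall>i\<in>{..<L}. \<forall>j\<in>nbrs N E i. eventually (\<lambda>t.
          (j < L \<longrightarrow> 0 \<le> beta (\<lambda>p q s. alpha p q s \<omega>) i j t)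
        \<and> (L \<le> j \<longrightarrow> beta (\<lambda>p q s. alpha p q s \<omega>) i j t < 0)) sequentially"
  proof (intro AE_finite_allI finite_nbrs finite_lessThan)
    fix i j assume ij: "i \<in> {..<L}" "j \<in> nbrs N E i"
    show "AE \<omega> in M. eventually (\<lambda>t.
          (j < L \<longrightarrow> 0 \<le> beta (\<lambda>p q s. alpha p q s \<omega>) i j t)
        \<and> (L \<le> j \<longrightarrow> beta (\<lambda>p q s. alpha p q s \<omega>) i j t < 0)) sequentially"
    proof (cases "j < L")
      case True
      have "AE \<omega> in M. eventually (\<lambda>n. (\<Sum>s\<le>n. alpha i j s \<omega> - 1/2) > 0) sequentially"
        by (rule AE_eventually_centered_sum_pos[OF P, where e=EL])
           (use ij True meas range indep meanL \<open>EL > 0\<close> in auto)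
      then show ?thesis
        using True by (elim AE_mp) (auto intro!: AE_I2 elim!: eventually_mono simp: beta_def)
    next
      case False
      have "AE \<omega> in M. eventually (\<lambda>n. (\<Sum>s\<le>n. alpha i j s \<omega> - 1/2) < 0) sequentially"
        by (rule AE_eventually_centered_sum_neg[OF P, where e=EM])
           (use ij False meas range indep meanM \<open>EM < 0\<close> in auto)
      then show ?thesis
        by (elim AE_mp) (auto intro!: AE_I2 elim!: eventually_mono simp: beta_def False)
    qed
  qed
  then show ?thesis
    by (elim AE_mp) (auto intro!: AE_I2 eventually_trusted_eq_legit_nbrs)
qed

lemma mat_vec_mat_mult: "mat_vec L (mat_mult L A B) y i = mat_vec L A (\<lambda>j. mat_vec L B y j) i"
  unfolding mat_vec_def mat_mult_def
  by (simp add: sum_distrib_left sum_distrib_right mult.assoc) (rule sum.swap)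

lemma mat_vec_cong: "(\<And>j. j < L \<Longrightarrow> y j = y' j) \<Longrightarrow> mat_vec L A y i = mat_vec L A y' i"
  unfolding mat_vec_def by (intro sum.cong) auto

lemma mat_vec_mat_id: "i < L \<Longrightarrow> mat_vec L mat_id y i = y i"
proof -
  assume "i < L"
  have "mat_vec L mat_id y i = (\<Sum>k<L. if i = k then y k else 0)"
    unfolding mat_vec_def mat_id_def by (intro sum.cong) auto
  with \<open>i < L\<close> show ?thesis by simp
qed

lemma mat_vec_add: "mat_vec L A (\<lambda>j. y j + z j) i = mat_vec L A y i + mat_vec L A z i"
  unfolding mat_vec_def by (simp add: distrib_left sum.distrib)

lemma mat_vec_scale: "mat_vec L A (\<lambda>j. r * y j) i = r * mat_vec L A y i"
  unfolding mat_vec_def by (simp add: sum_distrib_left mult_ac)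

lemma mat_vec_sum: "finite K \<Longrightarrow> mat_vec L A (\<lambda>j. \<Sum>k\<in>K. y k j) i = (\<Sum>k\<in>K. mat_vec L A (y k) i)"
  unfolding mat_vec_def by (simp add: sum_distrib_left) (rule sum.swap)

lemma abs_mat_vec_le:
  assumes "i < L" and nonneg: "\<And>j. j < L \<Longrightarrow> 0 \<le> A i j" and row: "(\<Sum>j<L. A i j) \<le> 1"
    and y: "\<And>j. j < L \<Longrightarrow> \<bar>y j\<bar> \<le> B"
  shows "\<bar>mat_vec L A y i\<bar> \<le> B"
proof -
  have "0 \<le> B" using y[of 0] \<open>i < L\<close> by auto
  have "\<bar>mat_vec L A y i\<bar> \<le> (\<Sum>j<L. A i j * \<bar>y j\<bar>)"
    unfolding mat_vec_def using nonneg by (auto intro: order.trans[OF sum_abs] simp: abs_mult)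
  also have "\<dots> \<le> (\<Sum>j<L. A i j) * B"
    unfolding sum_distrib_right by (intro sum_mono mult_left_mono) (auto simp: nonneg y)
  also have "\<dots> \<le> B" using row \<open>0 \<le> B\<close> by (intro mult_left_le_one_le) (auto intro: sum_nonneg nonneg)
  finally show ?thesis .
qed

lemma trusted_subset_nbrs: "trusted N E a i t \<subseteq> nbrs N E i"
  by (auto simp: trusted_def)

lemma sum_woff:
  "(\<Sum>k\<in>nbrs N E i. woff N E a i k t)
     = real (card (trusted N E a i t)) / (real (card (trusted N E a i t)) + 1)"
proof -
  let ?S = "trusted N E a i t"
  have "(\<Sum>k\<in>nbrs N E i. woff N E a i k t) = (\<Sum>k\<in>?S. 1 / (real (card ?S) + 1))"
    unfolding woff_def using trusted_subset_nbrs finite_nbrs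
    by (simp add: sum.If_cases Int_absorb1)
  then show ?thesis by simp
qed

lemma wt_diag: "wt N E a i i t = 1 / (real (card (trusted N E a i t)) + 1)"
  unfolding wt_def sum_woff by (simp add: field_simps)

lemma wt_nonneg: "0 \<le> wt N E a i j t"
  by (cases "j = i") (simp_all add: wt_diag wt_def woff_def)

lemma wt_eq_0: "j \<notin> insert i (nbrs N E i) \<Longrightarrow> wt N E a i j t = 0"
  using trusted_subset_nbrs[of N E a i t] by (auto simp: wt_def woff_def)

lemma sum_wt_nbrs: "(\<Sum>j\<in>insert i (nbrs N E i). wt N E a i j t) = 1"
proof -
  have "i \<notin> nbrs N E i" by (simp add: nbrs_def)
  then have "(\<Sum>j\<in>insert i (nbrs N E i). wt N E a i j t)
      = wt N E a i i t + (\<Sum>j\<in>nbrs N E i. woff N E a i j t)"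
    using finite_nbrs by (auto simp: wt_def intro!: sum.cong)
  then show ?thesis by (simp add: wt_def)
qed

lemma sum_wt_mult_lessThan:
  "i < N \<Longrightarrow> (\<Sum>j\<in>insert i (nbrs N E i). wt N E a i j t * y j) = (\<Sum>j<N. wt N E a i j t * y j)"
proof (rule sum.mono_neutral_left)
  show "\<forall>j\<in>{..<N} - insert i (nbrs N E i). wt N E a i j t * y j = 0" using wt_eq_0 by auto
qed (auto simp: nbrs_def)

lemma sum_wt_lessThan: "i < N \<Longrightarrow> (\<Sum>j<N. wt N E a i j t) = 1"
  using sum_wt_mult_lessThan[of i N E a t "\<lambda>_. 1"] sum_wt_nbrs by simp

lemma sum_lessThan_split:
  "L \<le> N \<Longrightarrow> (\<Sum>j<N. f j) = (\<Sum>j<L. f j) + (\<Sum>j\<in>{L..<N}. f j)"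
  for f :: "nat \<Rightarrow> real"
  by (simp add: lessThan_atLeast0 sum.atLeastLessThan_concat)

lemma sum_Wbar: "i < L \<Longrightarrow> (\<Sum>j<L. Wbar N L E i j) = 1"
proof -
  assume "i < L"
  let ?S = "nbrs N E i \<inter> {..<L}"
  have "i \<notin> ?S" "finite ?S" by (simp_all add: nbrs_def)
  have "(\<Sum>j<L. Wbar N L E i j) = (\<Sum>j\<in>insert i ?S. Wbar N L E i j)"
    using \<open>i < L\<close> by (intro sum.mono_neutral_right) (auto simp: Wbar_def)
  also have "\<dots> = Wbar N L E i i + (\<Sum>j\<in>?S. Wbar N L E i j)"
    using \<open>i \<notin> ?S\<close> \<open>finite ?S\<close> by simp
  also have "(\<Sum>j\<in>?S. Wbar N L E i j) = (\<Sum>j\<in>?S. 1 / (real (card ?S) + 1))"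
    using \<open>i \<notin> ?S\<close> by (intro sum.cong) (auto simp: Wbar_def)
  finally show ?thesis by (simp add: Wbar_def)
qed

lemma wt_eq_Wbar:
  assumes "trusted N E a i t = nbrs N E i \<inter> {..<L}" and "j < L"
  shows "wt N E a i j t = Wbar N L E i j"
proof (cases "j = i")
  case True
  then show ?thesis using assms(1) by (simp add: wt_def Wbar_def sum_woff)
next
  case False
  then show ?thesis using assms by (simp add: wt_def Wbar_def woff_def)
qed

lemma lam_pos: "0 < c \<Longrightarrow> 0 < lam c \<gamma> t"
  by (simp add: lam_def)

lemma lam_lt_1: "0 < c \<Longrightarrow> c < 1 \<Longrightarrow> 0 \<le> \<gamma> \<Longrightarrow> lam c \<gamma> t < 1"
proof -
  assume "0 < c" "c < 1" "0 \<le> \<gamma>"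
  then have "c * exp (- \<gamma> * real t) \<le> c" by (intro mult_left_le) auto
  with \<open>c < 1\<close> show ?thesis by (simp add: lam_def)
qed

lemma summable_lam: "0 < \<gamma> \<Longrightarrow> summable (lam c \<gamma>)"
proof -
  have "lam c \<gamma> = (\<lambda>t. c * exp (- \<gamma>) ^ t)"
    by (auto simp: lam_def exp_of_nat_mult[symmetric] mult.commute)
  moreover assume "0 < \<gamma>"
  ultimately show ?thesis by (simp add: summable_geometric)
qed

lemma LIMSEQ_prod_one_minus_lam:
  assumes "0 < c" "c < 1" "0 < \<gamma>"
  shows "(\<lambda>n. \<Prod>k<n. 1 - lam c \<gamma> (k + m)) \<longlonglongrightarrow> (\<Prod>k. 1 - lam c \<gamma> (k + m))"
proof -
  have "summable (\<lambda>k. \<bar>- lam c \<gamma> (k + m)\<bar>)"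
    using summable_ignore_initial_segment[OF summable_lam, of \<gamma> c m] assms
    by (simp add: abs_of_pos lam_pos)
  moreover have "- lam c \<gamma> (k + m) \<noteq> -1" for k using lam_lt_1[of c \<gamma> "k + m"] assms by auto
  ultimately have "convergent_prod (\<lambda>k. 1 + - lam c \<gamma> (k + m))"
    by (rule summable_imp_convergent_prod_real)
  then show ?thesis
    using convergent_prod_LIMSEQ by (force simp: LIMSEQ_lessThan_iff_atMost)
qed

lemma prod_one_minus_lam_bounds:
  "0 < c \<Longrightarrow> c < 1 \<Longrightarrow> 0 < \<gamma> \<Longrightarrow>
     0 \<le> (\<Prod>k<n. 1 - lam c \<gamma> (k + m)) \<and> (\<Prod>k<n. 1 - lam c \<gamma> (k + m)) \<le> 1"
  using lam_lt_1[of c \<gamma>] lam_pos[of c \<gamma>] by (auto intro!: prod_nonneg prod_le_1 simp: less_imp_le)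

lemma Plam_bounds: "0 < c \<Longrightarrow> c < 1 \<Longrightarrow> 0 < \<gamma> \<Longrightarrow> 0 \<le> Plam c \<gamma> T s \<and> Plam c \<gamma> T s \<le> 1"
  using LIMSEQ_le_const[OF LIMSEQ_prod_one_minus_lam] LIMSEQ_le_const2[OF LIMSEQ_prod_one_minus_lam]
    prod_one_minus_lam_bounds
  by (metis Plam_def)

section \<open>Unrolling the protocol\<close>

locale protocol_run =
  fixes N L :: nat and E :: "nat \<Rightarrow> nat \<Rightarrow> bool" and a :: "nat \<Rightarrow> nat \<Rightarrow> nat \<Rightarrow> real"
    and c \<gamma> \<eta> :: real and x :: "nat \<Rightarrow> nat \<Rightarrow> real"
  assumes L_le_N: "L \<le> N" and c_pos: "0 < c" and c_lt_1: "c < 1" and gamma_pos: "0 < \<gamma>"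
    and initial_bound: "\<And>i. i < L \<Longrightarrow> \<bar>x i 0\<bar> \<le> \<eta>"
    and protocol: "\<And>i t. i < L \<Longrightarrow> x i (Suc t) = lam c \<gamma> t * x i 0
          + (1 - lam c \<gamma> t) * (\<Sum>j\<in>insert i (nbrs N E i). wt N E a i j t * x j t)"
begin

definition damped_wt :: "nat \<Rightarrow> nat \<Rightarrow> nat \<Rightarrow> real" where
  "damped_wt k i j = (1 - lam c \<gamma> k) * wt N E a i j k"

definition transport :: "nat \<Rightarrow> nat \<Rightarrow> (nat \<Rightarrow> real) \<Rightarrow> nat \<Rightarrow> real" where
  "transport s t y = mat_vec L (oprod L damped_wt s (t - s)) y"

definition malicious_input :: "nat \<Rightarrow> nat \<Rightarrow> real" where
  "malicious_input k i = (1 - lam c \<gamma> k) * (\<Sum>m\<in>{L..<N}. wt N E a i m k * x m k)"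

lemma transport_Suc:
  "s \<le> t \<Longrightarrow> transport s (Suc t) y i = mat_vec L (damped_wt t) (\<lambda>j. transport s t y j) i"
  by (simp add: transport_def Suc_diff_le mat_vec_mat_mult)

lemma transport_self: "i < L \<Longrightarrow> transport s s y i = y i"
  by (simp add: transport_def mat_vec_mat_id)

lemma transport_cong: "(\<And>j. j < L \<Longrightarrow> y j = y' j) \<Longrightarrow> transport s t y i = transport s t y' i"
  unfolding transport_def by (rule mat_vec_cong)

lemma Qm_eq_transport: "mat_vec L (Qm N L E a c \<gamma> T s) y j = transport s (max s T) y j"
proof -
  have "(\<lambda>k i j. (1 - lam c \<gamma> k) * wt N E a i j k) = damped_wt" by (intro ext) (simp add: damped_wt_def)
  then show ?thesis by (simp add: Qm_def transport_def)
qed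

lemma abs_transport_le:
  assumes "i < L" "\<And>j. j < L \<Longrightarrow> \<bar>y j\<bar> \<le> B"
  shows "\<bar>transport s t y i\<bar> \<le> B"
  using assms(1)
proof (induction t arbitrary: i)
  case (Suc t)
  show ?case
  proof (cases "s \<le> t")
    case True
    have "(\<Sum>j<L. wt N E a i j t) \<le> (\<Sum>j<N. wt N E a i j t)"
      using L_le_N by (intro sum_mono2) (auto simp: wt_nonneg)
    also have "\<dots> = 1" using Suc.prems L_le_N by (intro sum_wt_lessThan) auto
    finally have "(\<Sum>j<L. damped_wt t i j) \<le> 1"
      using lam_pos[OF c_pos, of \<gamma> t] lam_lt_1[OF c_pos c_lt_1, of \<gamma> t] gamma_pos
      by (auto simp: damped_wt_def sum_distrib_left[symmetric] intro!: mult_le_one sum_nonneg wt_nonneg)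
    then show ?thesis
      using True Suc lam_lt_1[OF c_pos c_lt_1, of \<gamma> t] gamma_pos
      by (auto simp: transport_Suc damped_wt_def wt_nonneg intro!: abs_mat_vec_le)
  qed (use Suc assms(2) in \<open>simp add: transport_def mat_vec_mat_id\<close>)
qed (use assms(2) in \<open>simp add: transport_def mat_vec_mat_id\<close>)

lemma protocol_split:
  "i < L \<Longrightarrow> x i (Suc t) = lam c \<gamma> t * x i 0 + mat_vec L (damped_wt t) (\<lambda>j. x j t) i
     + malicious_input t i"
proof -
  assume "i < L"
  then have "(\<Sum>j\<in>insert i (nbrs N E i). wt N E a i j t * x j t)
      = (\<Sum>j<L. wt N E a i j t * x j t) + (\<Sum>j\<in>{L..<N}. wt N E a i j t * x j t)"
    using L_le_N by (simp add: sum_wt_mult_lessThan sum_lessThan_split)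
  moreover have "mat_vec L (damped_wt t) (\<lambda>j. x j t) i
      = (1 - lam c \<gamma> t) * (\<Sum>j<L. wt N E a i j t * x j t)"
    by (simp add: mat_vec_def damped_wt_def sum_distrib_left mult_ac)
  ultimately show ?thesis
    using protocol[OF \<open>i < L\<close>] by (simp add: malicious_input_def distrib_left)
qed

lemma state_eq_transport_sum:
  "i < L \<Longrightarrow> x i t = transport 0 t (\<lambda>j. x j 0) i
     + (\<Sum>k<t. transport (Suc k) t (\<lambda>j. lam c \<gamma> k * x j 0) i)
     + (\<Sum>k<t. transport (Suc k) t (malicious_input k) i)"
proof (induction t arbitrary: i)
  case 0
  then show ?case by (simp add: transport_self)
next
  case (Suc t)
  have "mat_vec L (damped_wt t) (\<lambda>j. x j t) i
      = mat_vec L (damped_wt t) (\<lambda>j. transport 0 t (\<lambda>j. x j 0) j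
          + (\<Sum>k<t. transport (Suc k) t (\<lambda>j. lam c \<gamma> k * x j 0) j)
          + (\<Sum>k<t. transport (Suc k) t (malicious_input k) j)) i"
    by (rule mat_vec_cong) (rule Suc.IH)
  also have "\<dots> = transport 0 (Suc t) (\<lambda>j. x j 0) i
      + (\<Sum>k<t. transport (Suc k) (Suc t) (\<lambda>j. lam c \<gamma> k * x j 0) i)
      + (\<Sum>k<t. transport (Suc k) (Suc t) (malicious_input k) i)"
    by (simp add: mat_vec_add mat_vec_sum transport_Suc)
  finally show ?case
    using protocol_split[OF Suc.prems] Suc.prems by (simp add: transport_self)
qed

end

section \<open>Convergence once the trust has settled\<close>

locale settled_run = protocol_run +
  fixes v :: "nat \<Rightarrow> real"
  assumes trust_settles: "eventually (\<lambda>t. \<forall>i<L. trusted N E a i t = nbrs N E i \<inter> {..<L}) sequentially"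
    and Wbar_power_limit: "\<And>i j. i < L \<Longrightarrow> j < L \<Longrightarrow> (\<lambda>n. matpow L (Wbar N L E) n i j) \<longlonglongrightarrow> v j"
begin

abbreviation T :: nat where "T \<equiv> Tf N L E a"

lemma wt_eq_Wbar_after_Tf: "T \<le> t \<Longrightarrow> i < L \<Longrightarrow> j < L \<Longrightarrow> wt N E a i j t = Wbar N L E i j"
proof -
  obtain T0 where "\<forall>t\<ge>T0. \<forall>i<L. \<forall>j<L. wt N E a i j t = Wbar N L E i j"
    using trust_settles wt_eq_Wbar unfolding eventually_sequentially by metis
  then have "\<forall>t\<ge>T. \<forall>i<L. \<forall>j<L. wt N E a i j t = Wbar N L E i j"
    unfolding Tf_def by (rule LeastI)
  then show "T \<le> t \<Longrightarrow> i < L \<Longrightarrow> j < L \<Longrightarrow> wt N E a i j t = Wbar N L E i j" by blast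
qed

text \<open>T_f only pins down the legitimate block of the weights; the malicious weights vanish after
  T_f because the rows of W^L_t then already sum to one.\<close>

lemma wt_malicious_after_Tf: "T \<le> t \<Longrightarrow> i < L \<Longrightarrow> L \<le> m \<Longrightarrow> wt N E a i m t = 0"
proof (cases "m < N")
  case True
  assume "T \<le> t" "i < L" "L \<le> m"
  then have "(\<Sum>j<L. wt N E a i j t) = 1"
    using sum_Wbar by (simp add: wt_eq_Wbar_after_Tf)
  then have "(\<Sum>j\<in>{L..<N}. wt N E a i j t) = 0"
    using sum_wt_lessThan[of i N E a t] sum_lessThan_split[OF L_le_N] \<open>i < L\<close> L_le_N by simp
  then show ?thesis
    using True \<open>L \<le> m\<close> by (subst (asm) sum_nonneg_eq_0_iff) (auto simp: wt_nonneg)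
qed (auto intro!: wt_eq_0 simp: nbrs_def)

lemma malicious_input_after_Tf: "T \<le> k \<Longrightarrow> i < L \<Longrightarrow> malicious_input k i = 0"
  by (simp add: malicious_input_def wt_malicious_after_Tf)

lemma transport_after_Tf:
  "i < L \<Longrightarrow> transport s (n + max s T) y i
     = (\<Prod>k<n. 1 - lam c \<gamma> (k + max s T))
       * mat_vec L (matpow L (Wbar N L E) n) (\<lambda>j. transport s (max s T) y j) i"
proof (induction n arbitrary: i)
  case 0
  then show ?case by (simp add: mat_vec_mat_id)
next
  case (Suc n)
  let ?m = "max s T" and ?p = "\<Prod>k<n. 1 - lam c \<gamma> (k + max s T)"
  have "transport s (Suc n + ?m) y i = mat_vec L (damped_wt (n + ?m)) (\<lambda>j. transport s (n + ?m) y j) i"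
    by (simp add: transport_Suc)
  also have "\<dots> = (1 - lam c \<gamma> (n + ?m)) * mat_vec L (Wbar N L E) (\<lambda>j. transport s (n + ?m) y j) i"
    using Suc.prems by (simp add: mat_vec_def damped_wt_def sum_distrib_left wt_eq_Wbar_after_Tf mult_ac)
  also have "mat_vec L (Wbar N L E) (\<lambda>j. transport s (n + ?m) y j) i
      = mat_vec L (Wbar N L E) (\<lambda>j. ?p * mat_vec L (matpow L (Wbar N L E) n) (\<lambda>j. transport s ?m y j) j) i"
    by (rule mat_vec_cong) (rule Suc.IH)
  finally show ?case by (simp add: mat_vec_scale mat_vec_mat_mult mult_ac)
qed

lemma transport_limit:
  "i < L \<Longrightarrow> (\<lambda>t. transport s t y i) \<longlonglongrightarrow>
     Plam c \<gamma> T s * (\<Sum>j<L. v j * mat_vec L (Qm N L E a c \<gamma> T s) y j)"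
proof -
  assume "i < L"
  let ?m = "max s T"
  have "(\<lambda>n. mat_vec L (matpow L (Wbar N L E) n) (\<lambda>j. transport s ?m y j) i)
      \<longlonglongrightarrow> (\<Sum>j<L. v j * transport s ?m y j)"
    unfolding mat_vec_def using Wbar_power_limit \<open>i < L\<close> by (intro tendsto_intros) auto
  from tendsto_mult[OF LIMSEQ_prod_one_minus_lam[OF c_pos c_lt_1 gamma_pos] this]
  have "(\<lambda>n. transport s (n + ?m) y i) \<longlonglongrightarrow> Plam c \<gamma> T s * (\<Sum>j<L. v j * transport s ?m y j)"
    by (simp add: Plam_def transport_after_Tf[OF \<open>i < L\<close>])
  then show ?thesis by (simp add: Qm_eq_transport LIMSEQ_offset)
qed

lemma abs_xtL_term_le: "j < L \<Longrightarrow> \<bar>xtL_term N L E a c \<gamma> (\<lambda>j. x j 0) j k\<bar> \<le> lam c \<gamma> k * \<eta>"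
proof -
  assume "j < L"
  have "\<bar>lam c \<gamma> k * x l 0\<bar> \<le> lam c \<gamma> k * \<eta>" if "l < L" for l
    using initial_bound[OF that] lam_pos[OF c_pos, of \<gamma> k]
    by (simp add: abs_mult mult_left_mono)
  then have "\<bar>transport (Suc k) (max (Suc k) T) (\<lambda>j. lam c \<gamma> k * x j 0) j\<bar> \<le> lam c \<gamma> k * \<eta>"
    by (rule abs_transport_le[OF \<open>j < L\<close>])
  then have "\<bar>Plam c \<gamma> T (Suc k)\<bar> * \<bar>transport (Suc k) (max (Suc k) T) (\<lambda>j. lam c \<gamma> k * x j 0) j\<bar>
      \<le> 1 * (lam c \<gamma> k * \<eta>)"
    using Plam_bounds[OF c_pos c_lt_1 gamma_pos, of T "Suc k"] by (intro mult_mono) auto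
  then show ?thesis by (simp add: xtL_term_def Let_def Qm_eq_transport abs_mult)
qed

lemma summable_xtL_term: "j < L \<Longrightarrow> summable (xtL_term N L E a c \<gamma> (\<lambda>j. x j 0) j)"
  by (rule summable_comparison_test[where g="\<lambda>k. lam c \<gamma> k * \<eta>"])
     (auto simp: abs_xtL_term_le summable_lam[OF gamma_pos] intro: summable_mult2)

text \<open>The inputs lambda_k x^L(0) enter at every time, so their transports are summed by Tannery's
  theorem, with the summable majorant lambda_k eta.\<close>

lemma LIMSEQ_transported_initial_inputs:
  "i < L \<Longrightarrow> (\<lambda>t. \<Sum>k<t. transport (Suc k) t (\<lambda>j. lam c \<gamma> k * x j 0) i)
     \<longlonglongrightarrow> (\<Sum>j<L. v j * (\<Sum>k. xtL_term N L E a c \<gamma> (\<lambda>j. x j 0) j k))"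
proof -
  assume "i < L"
  define y where "y k = (\<lambda>j. lam c \<gamma> k * x j 0)" for k
  define f where "f k t = (if k < t then transport (Suc k) t (y k) i else 0)" for k t
  have y_bound: "\<bar>y k j\<bar> \<le> lam c \<gamma> k * \<eta>" if "j < L" for k j
    using initial_bound[OF that] lam_pos[OF c_pos, of \<gamma> k]
    by (simp add: y_def abs_mult mult_left_mono)
  have lim: "(\<lambda>t. f k t) \<longlonglongrightarrow> (\<Sum>j<L. v j * xtL_term N L E a c \<gamma> (\<lambda>j. x j 0) j k)" for k
  proof -
    have "(\<lambda>n. f k (n + Suc k)) \<longlonglongrightarrow> Plam c \<gamma> T (Suc k)
        * (\<Sum>j<L. v j * mat_vec L (Qm N L E a c \<gamma> T (Suc k)) (y k) j)"
      using LIMSEQ_ignore_initial_segment[OF transport_limit[OF \<open>i < L\<close>, where s="Suc k" and y="y k"], of "Suc k"]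
      by (simp add: f_def)
    then have "f k \<longlonglongrightarrow> Plam c \<gamma> T (Suc k)
        * (\<Sum>j<L. v j * mat_vec L (Qm N L E a c \<gamma> T (Suc k)) (y k) j)"
      by (rule LIMSEQ_offset)
    then show ?thesis
      by (simp add: xtL_term_def Let_def y_def sum_distrib_left mult_ac)
  qed
  have bound: "eventually (\<lambda>(k, n). norm (f k n) \<le> lam c \<gamma> k * \<eta>) (at_top \<times>\<^sub>F sequentially)"
  proof (rule always_eventually, clarify)
    fix k n
    have "0 \<le> lam c \<gamma> k * \<eta>" using y_bound[of 0 k] \<open>i < L\<close> by linarith
    then show "norm (f k n) \<le> lam c \<gamma> k * \<eta>"
      using abs_transport_le[OF \<open>i < L\<close> y_bound] by (simp add: f_def)
  qed
  have "(\<lambda>n. \<Sum>k. f k n)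
      \<longlonglongrightarrow> (\<Sum>k. \<Sum>j<L. v j * xtL_term N L E a c \<gamma> (\<lambda>j. x j 0) j k)"
    using tannerys_theorem[OF lim bound summable_mult2[OF summable_lam[OF gamma_pos]]] by simp
  moreover have "(\<Sum>k. f k n) = (\<Sum>k<n. transport (Suc k) n (y k) i)" for n
    by (subst suminf_finite[of "{..<n}"]) (auto simp: f_def)
  moreover have "(\<Sum>k. \<Sum>j<L. v j * xtL_term N L E a c \<gamma> (\<lambda>j. x j 0) j k)
      = (\<Sum>j<L. v j * (\<Sum>k. xtL_term N L E a c \<gamma> (\<lambda>j. x j 0) j k))"
    by (subst suminf_sum) (auto intro: summable_mult summable_xtL_term simp: suminf_mult summable_xtL_term)
  ultimately show ?thesis by (simp add: y_def)
qed

lemma LIMSEQ_transported_malicious_inputs: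
  "i < L \<Longrightarrow> (\<lambda>t. \<Sum>k<t. transport (Suc k) t (malicious_input k) i)
     \<longlonglongrightarrow> (\<Sum>j<L. v j * xtilde_M N L E a c \<gamma> x j)"
proof -
  assume "i < L"
  have "malicious_input k = (\<lambda>l. (1 - lam c \<gamma> k) * (\<Sum>m\<in>{L..<N}. wt N E a l m k * x m k))" for k
    by (intro ext) (simp add: malicious_input_def)
  then have limit_eq: "(\<Sum>j<L. v j * xtilde_M N L E a c \<gamma> x j) = (\<Sum>k<T. Plam c \<gamma> T (Suc k)
      * (\<Sum>j<L. v j * mat_vec L (Qm N L E a c \<gamma> T (Suc k)) (malicious_input k) j))"
    by (simp add: xtilde_M_def Let_def sum_distrib_left mult_ac) (rule sum.swap)
  have "(\<lambda>t. \<Sum>k<T. transport (Suc k) t (malicious_input k) i)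
      \<longlonglongrightarrow> (\<Sum>j<L. v j * xtilde_M N L E a c \<gamma> x j)"
    unfolding limit_eq by (intro tendsto_sum transport_limit \<open>i < L\<close>)
  moreover have "eventually (\<lambda>t. (\<Sum>k<T. transport (Suc k) t (malicious_input k) i)
      = (\<Sum>k<t. transport (Suc k) t (malicious_input k) i)) sequentially"
  proof (rule eventually_sequentiallyI, rule sum.mono_neutral_left)
    fix t assume "T \<le> t"
    show "\<forall>k\<in>{..<t} - {..<T}. transport (Suc k) t (malicious_input k) i = 0"
    proof
      fix k assume "k \<in> {..<t} - {..<T}"
      then have "transport (Suc k) t (malicious_input k) i = transport (Suc k) t (\<lambda>_. 0) i"
        by (intro transport_cong) (simp add: malicious_input_after_Tf)
      then show "transport (Suc k) t (malicious_input k) i = 0"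
        by (simp add: transport_def mat_vec_def)
    qed
  qed auto
  ultimately show ?thesis
    by (rule Lim_transform_eventually)
qed

theorem consensus_limit:
  "(\<forall>i<L. summable (xtL_term N L E a c \<gamma> (\<lambda>j. x j 0) i))
   \<and> (\<forall>i<L. (\<lambda>t. x i t) \<longlonglongrightarrow>
        (\<Sum>j<L. v j * (xtilde_L N L E a c \<gamma> (\<lambda>j. x j 0) j + xtilde_M N L E a c \<gamma> (\<lambda>m k. x m k) j)))"
proof (intro conjI allI impI summable_xtL_term)
  fix i assume "i < L"
  have "(\<lambda>t. transport 0 t (\<lambda>j. x j 0) i
          + (\<Sum>k<t. transport (Suc k) t (\<lambda>j. lam c \<gamma> k * x j 0) i)
          + (\<Sum>k<t. transport (Suc k) t (malicious_input k) i))
     \<longlonglongrightarrow> Plam c \<gamma> T 0 * (\<Sum>j<L. v j * mat_vec L (Qm N L E a c \<gamma> T 0) (\<lambda>j. x j 0) j)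
        + (\<Sum>j<L. v j * (\<Sum>k. xtL_term N L E a c \<gamma> (\<lambda>j. x j 0) j k))
        + (\<Sum>j<L. v j * xtilde_M N L E a c \<gamma> x j)"
    using \<open>i < L\<close> by (intro tendsto_add transport_limit LIMSEQ_transported_initial_inputs
        LIMSEQ_transported_malicious_inputs)
  then show "(\<lambda>t. x i t) \<longlonglongrightarrow>
      (\<Sum>j<L. v j * (xtilde_L N L E a c \<gamma> (\<lambda>j. x j 0) j + xtilde_M N L E a c \<gamma> (\<lambda>m k. x m k) j))"
    using state_eq_transport_sum[OF \<open>i < L\<close>]
    by (simp add: xtilde_L_def Let_def sum_distrib_left distrib_left sum.distrib mult_ac)
qed

end

text \<open>Since the
  malicious inputs vanish after T_f, the state bound is needed only for x^L(0).\<close>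

theorem mainTheorem1:
  fixes M :: "'a measure"
    and N L :: nat
    and E :: "nat \<Rightarrow> nat \<Rightarrow> bool"
    and alpha :: "nat \<Rightarrow> nat \<Rightarrow> nat \<Rightarrow> 'a \<Rightarrow> real"
    and x :: "nat \<Rightarrow> nat \<Rightarrow> 'a \<Rightarrow> real"
    and c \<gamma> \<eta> EL EM :: real
    and v :: "nat \<Rightarrow> real"
  assumes P: "prob_space M"
    and LN: "0 < L" "L \<le> N"
    and conn: "\<forall>i<L. \<forall>j<L. (\<lambda>p q. p < L \<and> q < L \<and> E p q)\<^sup>*\<^sup>* i j"
    and c: "0 < c" "c < 1" and gam: "0 < \<gamma>"
    and bound: "\<forall>i<N. \<forall>t. \<forall>\<omega>\<in>space M. \<bar>x i t \<omega>\<bar> \<le> \<eta>"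
    and meas: "\<forall>i<L. \<forall>j\<in>nbrs N E i. \<forall>t. alpha i j t \<in> borel_measurable M"
    and range: "\<forall>i<L. \<forall>j\<in>nbrs N E i. \<forall>t. \<forall>\<omega>\<in>space M. 0 \<le> alpha i j t \<omega> \<and> alpha i j t \<omega> \<le> 1"
    and indep: "\<forall>i<L. \<forall>j\<in>nbrs N E i.
                  prob_space.indep_vars M (\<lambda>_. borel) (\<lambda>t. alpha i j t) UNIV"
    and meanL: "\<forall>i<L. \<forall>j\<in>nbrs N E i. j < L \<longrightarrow>
                  (\<forall>t. prob_space.expectation M (alpha i j t) - 1/2 = EL)"
    and meanM: "\<forall>i<L. \<forall>j\<in>nbrs N E i. L \<le> j \<longrightarrow>
                  (\<forall>t. prob_space.expectation M (alpha i j t) - 1/2 = EM)"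
    and EL: "EL > 0" and EM: "EM < 0"
    and protocol: "\<forall>\<omega>\<in>space M. \<forall>i<L. \<forall>t.
        x i (Suc t) \<omega> = lam c \<gamma> t * x i 0 \<omega>
          + (1 - lam c \<gamma> t) * (\<Sum>j\<in>insert i (nbrs N E i).
                 wt N E (\<lambda>p q s. alpha p q s \<omega>) i j t * x j t \<omega>)"
    and v_stoch: "\<forall>j<L. 0 \<le> v j" "(\<Sum>j<L. v j) = 1"
    and v_lim: "\<forall>i<L. \<forall>j<L. (\<lambda>n. matpow L (Wbar N L E) n i j) \<longlonglongrightarrow> v j"
  shows "AE \<omega> in M.
           (\<forall>i<L. summable (xtL_term N L E (\<lambda>p q s. alpha p q s \<omega>) c \<gamma> (\<lambda>j. x j 0 \<omega>) i))
         \<and> (\<forall>i<L. (\<lambda>t. x i t \<omega>) \<longlonglongrightarrow>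
               (\<Sum>j<L. v j * (xtilde_L N L E (\<lambda>p q s. alpha p q s \<omega>) c \<gamma> (\<lambda>j. x j 0 \<omega>) j
                             + xtilde_M N L E (\<lambda>p q s. alpha p q s \<omega>) c \<gamma> (\<lambda>m k. x m k \<omega>) j)))"
proof -
  have settles: "AE \<omega> in M. eventually (\<lambda>t. \<forall>i<L.
          trusted N E (\<lambda>p q s. alpha p q s \<omega>) i t = nbrs N E i \<inter> {..<L}) sequentially"
    by (rule AE_eventually_trusted_eq_legit_nbrs[OF P meas range indep meanL meanM EL EM])
  have run: "settled_run N L E (\<lambda>p q s. alpha p q s \<omega>) c \<gamma> \<eta> (\<lambda>m k. x m k \<omega>) v"
    if "\<omega> \<in> space M" and "eventually (\<lambda>t. \<forall>i<L.
          trusted N E (\<lambda>p q s. alpha p q s \<omega>) i t = nbrs N E i \<inter> {..<L}) sequentially" for \<omega>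
  proof unfold_locales
    show "\<And>i. i < L \<Longrightarrow> \<bar>x i 0 \<omega>\<bar> \<le> \<eta>" using bound that(1) LN by auto
    show "\<And>i t. i < L \<Longrightarrow> x i (Suc t) \<omega> = lam c \<gamma> t * x i 0 \<omega>
          + (1 - lam c \<gamma> t) * (\<Sum>j\<in>insert i (nbrs N E i). wt N E (\<lambda>p q s. alpha p q s \<omega>) i j t * x j t \<omega>)"
      using protocol that(1) by blast
  qed (use that(2) LN c gam v_lim in simp_all)
  show ?thesis
    by (rule AE_mp[OF settles]) (auto intro!: AE_I2 settled_run.consensus_limit[OF run])
qed

end
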